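(* For integers $n,k\geqslant 1$, let $\mathfrak{C}_{n,k}$ be the set of words $\omega=(\omega_1,\dots,\omega_n)$ of length $n$ on the alphabet $\{1,\dots,k\}$ that avoid both patterns $010$ and $000$, contain every letter of $\{1,\dots,k\}$, and satisfy $\omega_1=k$; let $\mathfrak{c}_{n,k}=\#\mathfrak{C}_{n,k}$, with $\mathfrak{c}_{0,k}=0$ for $k\geqslant1$. Then for all $n,k\geqslant 2$, $$\mathfrak{c}_{n,k}=(n-1)\,\mathfrak{c}_{n-1,k-1}+(n-2)\,\mathfrak{c}_{n-2,k-1}.$$
   Context: A word contains a pattern $p$ if some subsequence of it is order-isomorphic to $p$; otherwise it avoids $p$. Avoiding $010$ means no $i<j<l$ with $\omega_i=\omega_l<\omega_j$; avoiding $000$ means no letter occurs three or more times. *)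

theory Defs
  imports Main
begin

definition avoids_010 :: "nat list \<Rightarrow> bool" where
  "avoids_010 w \<longleftrightarrow> \<not> (\<exists>i j l. i < j \<and> j < l \<and> l < length w \<and>
      w ! i = w ! l \<and> w ! l < w ! j)"

definition avoids_000 :: "nat list \<Rightarrow> bool" where
  "avoids_000 w \<longleftrightarrow> \<not> (\<exists>i j l. i < j \<and> j < l \<and> l < length w \<and>
      w ! i = w ! j \<and> w ! j = w ! l)"

definition Cset :: "nat \<Rightarrow> nat \<Rightarrow> nat list set" where
  "Cset n k = {w. length w = n \<and> set w = {1..k} \<and> avoids_010 w \<and> avoids_000 w
      \<and> w \<noteq> [] \<and> hd w = k}"

definition cnum :: "nat \<Rightarrow> nat \<Rightarrow> nat" where
  "cnum n k = card (Cset n k)"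

end

theory Submission
  imports Defs
begin

text \<open>
  In a word of \<open>Cset n k\<close> with \<open>k \<ge> 2\<close> the smallest letter 1 occurs once or twice, and if
  twice then adjacently: three 1s would form \<open>000\<close>, and two separated 1s would enclose a
  larger letter, forming \<open>010\<close>. Deleting the block of \<open>m \<in> {1, 2}\<close> ones and lowering all
  other letters by one yields a word of \<open>Cset (n - m) (k - 1)\<close>. Conversely, a block of at
  most two copies of a new smallest letter never creates \<open>010\<close> or \<open>000\<close>, so it may be
  inserted after any of the \<open>n - m\<close> letters of such a word (not in front, as the first letter
  must remain \<open>k\<close>).
\<close>

definition occurs3 :: "('a \<Rightarrow> 'a \<Rightarrow> 'a \<Rightarrow> bool) \<Rightarrow> 'a list \<Rightarrow> bool" where
  "occurs3 R w \<longleftrightarrow> (\<exists>i j l. i < j \<and> j < l \<and> l < length w \<and> R (w ! i) (w ! j) (w ! l))"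

lemma avoids_010_iff_not_occurs3: "avoids_010 w \<longleftrightarrow> \<not> occurs3 (\<lambda>x y z. x = z \<and> z < y) w"
  unfolding avoids_010_def occurs3_def by auto

lemma avoids_000_iff_not_occurs3: "avoids_000 w \<longleftrightarrow> \<not> occurs3 (\<lambda>x y z. x = y \<and> y = z) w"
  unfolding avoids_000_def occurs3_def by auto

lemma occurs3_map: "occurs3 R (map f w) \<longleftrightarrow> occurs3 (\<lambda>a b c. R (f a) (f b) (f c)) w"
  unfolding occurs3_def by (rule ex_cong1)+ auto

lemma avoids_010_map_strict_mono:
  assumes "strict_mono f" shows "avoids_010 (map f w) \<longleftrightarrow> avoids_010 w"
  using assms by (simp add: avoids_010_iff_not_occurs3 occurs3_map strict_mono_eq strict_mono_less)

lemma avoids_000_map_inj: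
  assumes "inj f" shows "avoids_000 (map f w) \<longleftrightarrow> avoids_000 w"
  using assms by (simp add: avoids_000_iff_not_occurs3 occurs3_map inj_eq)

lemma occurs3_append_middle:
  assumes "occurs3 R (xs @ ys)" shows "occurs3 R (xs @ zs @ ys)"
proof -
  obtain i j l where occ: "i < j" "j < l" "l < length (xs @ ys)"
      "R ((xs @ ys) ! i) ((xs @ ys) ! j) ((xs @ ys) ! l)"
    using assms unfolding occurs3_def by blast
  define h where "h p = (if p < length xs then p else p + length zs)" for p
  have nth_h: "(xs @ zs @ ys) ! h p = (xs @ ys) ! p" if "p < length (xs @ ys)" for p
    using that by (auto simp: h_def nth_append)
  have mono_h: "h p < h q" if "p < q" for p q
    using that by (auto simp: h_def)
  have "h l < length (xs @ zs @ ys)"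
    using occ(3) by (auto simp: h_def)
  then show ?thesis
    unfolding occurs3_def using occ nth_h mono_h
    by (intro exI[of _ "h i"] exI[of _ "h j"] exI[of _ "h l"]) auto
qed

lemma occurs3_outside_block:
  assumes "i < j" "j < l" "l < length (xs @ zs @ ys)"
    and "\<forall>p\<in>{i, j, l}. p < length xs \<or> length xs + length zs \<le> p"
    and "R ((xs @ zs @ ys) ! i) ((xs @ zs @ ys) ! j) ((xs @ zs @ ys) ! l)"
  shows "occurs3 R (xs @ ys)"
proof -
  define g where "g p = (if p < length xs then p else p - length zs)" for p
  have nth_g: "(xs @ zs @ ys) ! p = (xs @ ys) ! g p" if "p \<in> {i, j, l}" for p
    using that assms(1-4) by (auto simp: g_def nth_append add.commute)
  have "g i < g j" "g j < g l" "g l < length (xs @ ys)"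
    using assms(1-4) by (auto simp: g_def)
  then show ?thesis
    unfolding occurs3_def using assms(5) nth_g
    by (intro exI[of _ "g i"] exI[of _ "g j"] exI[of _ "g l"]) auto
qed

lemma avoids_010_remove_middle: "avoids_010 (xs @ zs @ ys) \<Longrightarrow> avoids_010 (xs @ ys)"
  by (meson avoids_010_iff_not_occurs3 occurs3_append_middle)

lemma avoids_000_remove_middle: "avoids_000 (xs @ zs @ ys) \<Longrightarrow> avoids_000 (xs @ ys)"
  by (meson avoids_000_iff_not_occurs3 occurs3_append_middle)

lemma nth_append_replicate_min:
  fixes c :: "'a :: linorder"
  assumes "\<forall>x\<in>set (xs @ ys). c < x" and "p < length (xs @ replicate m c @ ys)"
  shows "(xs @ replicate m c @ ys) ! p = c \<longleftrightarrow> length xs \<le> p \<and> p < length xs + m"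
    and "c \<le> (xs @ replicate m c @ ys) ! p"
  using assms nth_mem[of p xs] nth_mem[of "p - length xs - m" ys]
  by (auto simp: nth_append not_less less_imp_le dest: less_imp_neq)

lemma avoids_010_insert_min_block:
  assumes above: "\<forall>x\<in>set (xs @ ys). c < x" and avoid: "avoids_010 (xs @ ys)"
  shows "avoids_010 (xs @ replicate m c @ ys)"
proof (rule ccontr)
  let ?w = "xs @ replicate m c @ ys"
  let ?B = "\<lambda>p. length xs \<le> p \<and> p < length xs + m"
  assume "\<not> avoids_010 ?w"
  then obtain i j l where occ: "i < j" "j < l" "l < length ?w" "?w ! i = ?w ! l" "?w ! l < ?w ! j"
    unfolding avoids_010_def by blast
  have in_range: "i < length ?w" "j < length ?w"
    using occ by simp_all
  note block = nth_append_replicate_min[OF above, where m = m]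
  have "\<not> ?B j"
    using block(1)[OF in_range(2)] block(2)[OF occ(3)] occ(5) by auto
  moreover have "\<not> ?B i \<and> \<not> ?B l"
    using block(1)[OF in_range(1)] block(1)[OF occ(3)] \<open>\<not> ?B j\<close> occ by auto
  ultimately have "occurs3 (\<lambda>x y z. x = z \<and> z < y) (xs @ ys)"
    by (intro occurs3_outside_block[of i j l _ "replicate m c"]) (use occ in auto)
  with avoid show False
    by (simp add: avoids_010_iff_not_occurs3)
qed

lemma avoids_000_insert_min_block:
  assumes above: "\<forall>x\<in>set (xs @ ys). c < x" and "m \<le> 2" and avoid: "avoids_000 (xs @ ys)"
  shows "avoids_000 (xs @ replicate m c @ ys)"
proof (rule ccontr)
  let ?w = "xs @ replicate m c @ ys"
  let ?B = "\<lambda>p. length xs \<le> p \<and> p < length xs + m"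
  assume "\<not> avoids_000 ?w"
  then obtain i j l where occ: "i < j" "j < l" "l < length ?w" "?w ! i = ?w ! j" "?w ! j = ?w ! l"
    unfolding avoids_000_def by blast
  have in_range: "i < length ?w" "j < length ?w"
    using occ by simp_all
  note block = nth_append_replicate_min(1)[OF above, where m = m]
  have "\<not> ?B i \<and> \<not> ?B j \<and> \<not> ?B l"
    using block[OF in_range(1)] block[OF in_range(2)] block[OF occ(3)] occ \<open>m \<le> 2\<close> by auto
  then have "occurs3 (\<lambda>x y z. x = y \<and> y = z) (xs @ ys)"
    by (intro occurs3_outside_block[of i j l _ "replicate m c"]) (use occ in auto)
  with avoid show False
    by (simp add: avoids_000_iff_not_occurs3)
qed

lemma avoids_010_no_larger_between:
  assumes "avoids_010 (xs @ c # ys @ c # zs)" and "x \<in> set ys"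
  shows "\<not> c < x"
proof
  assume "c < x"
  obtain q where q: "q < length ys" "ys ! q = x"
    using assms(2) by (auto simp: in_set_conv_nth)
  let ?w = "xs @ c # ys @ c # zs"
  have "?w ! length xs = c" "?w ! (Suc (length xs) + q) = x"
    "?w ! (Suc (length xs) + length ys) = c" "Suc (length xs) + length ys < length ?w"
    using q by (auto simp: nth_append)
  then have "\<not> avoids_010 ?w"
    unfolding avoids_010_def not_not using \<open>c < x\<close> q(1)
    by (intro exI[of _ "length xs"] exI[of _ "Suc (length xs) + q"]
        exI[of _ "Suc (length xs) + length ys"]) auto
  with assms(1) show False
    by simp
qed

lemma avoids_000_no_third:
  assumes "avoids_000 (xs @ c # c # zs)"
  shows "c \<notin> set zs"
proof
  assume "c \<in> set zs"
  then obtain q where q: "q < length zs" "zs ! q = c"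
    by (auto simp: in_set_conv_nth)
  let ?w = "xs @ c # c # zs"
  have "?w ! length xs = c" "?w ! Suc (length xs) = c" "?w ! (length xs + 2 + q) = c"
    "length xs + 2 + q < length ?w"
    using q by (auto simp: nth_append)
  then have "\<not> avoids_000 ?w"
    unfolding avoids_000_def not_not
    by (intro exI[of _ "length xs"] exI[of _ "Suc (length xs)"] exI[of _ "length xs + 2 + q"]) auto
  with assms show False
    by simp
qed

lemma min_letter_block:
  fixes w :: "nat list"
  assumes avoid: "avoids_010 w" "avoids_000 w" and c: "c \<in> set w" "\<forall>x\<in>set w. c \<le> x"
  obtains xs ys m where "w = xs @ replicate m c @ ys" "c \<notin> set xs" "c \<notin> set ys" "m \<in> {1, 2}"
proof -
  obtain xs ys where w: "w = xs @ c # ys" "c \<notin> set xs"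
    using split_list_first[OF c(1)] by blast
  show ?thesis
  proof (cases "c \<in> set ys")
    case False
    with w show ?thesis
      using that[of xs 1 ys] by simp
  next
    case True
    then obtain ys1 ys2 where ys: "ys = ys1 @ c # ys2" "c \<notin> set ys1"
      using split_list_first by metis
    have "ys1 = []"
    proof (rule ccontr)
      assume "ys1 \<noteq> []"
      then obtain x where x: "x \<in> set ys1"
        by (meson list.set_sel(1))
      then have "c < x"
        using c(2) w(1) ys by (metis Un_iff le_neq_implies_less list.set_intros(2) set_append)
      with x show False
        using avoids_010_no_larger_between avoid(1) w(1) ys(1) by blast
    qed
    moreover have "c \<notin> set ys2"
      using avoids_000_no_third avoid(2) w(1) ys(1) \<open>ys1 = []\<close> by simp
    ultimately show ?thesis
      using that[of xs 2 ys2] w ys by (simp add: numeral_2_eq_2)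
  qed
qed

definition insert_ones :: "nat \<Rightarrow> nat \<Rightarrow> nat list \<Rightarrow> nat list" where
  "insert_ones m i v = take i (map Suc v) @ replicate m 1 @ drop i (map Suc v)"

definition remove_ones :: "nat list \<Rightarrow> nat \<times> nat \<times> nat list" where
  "remove_ones w = (count_list w 1, length (takeWhile (\<lambda>x. x \<noteq> 1) w),
      map (\<lambda>x. x - 1) (filter (\<lambda>x. x \<noteq> 1) w))"

lemma remove_ones_insert_ones:
  assumes "1 \<le> m" and "i \<le> length v" and "0 \<notin> set v"
  shows "remove_ones (insert_ones m i v) = (m, i, v)"
proof -
  let ?u = "map Suc v" and ?P = "\<lambda>x. x \<noteq> 1"
  have no_one: "1 \<notin> set ?u"
    using assms(3) by auto
  have "count_list (insert_ones m i v) 1 = m"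
  proof -
    have "count_list (replicate m (1::nat)) 1 = m"
      by (induction m) auto
    moreover have "1 \<notin> set (take i ?u)" "1 \<notin> set (drop i ?u)"
      using no_one by (auto dest: in_set_takeD in_set_dropD)
    ultimately show ?thesis
      by (simp add: insert_ones_def)
  qed
  moreover have "takeWhile ?P (insert_ones m i v) = take i ?u"
    using no_one assms(1) unfolding insert_ones_def
    by (subst takeWhile_append2) (auto dest: in_set_takeD simp: Suc_le_eq)
  moreover have "filter ?P (insert_ones m i v) = ?u"
  proof -
    have "filter ?P (insert_ones m i v) = filter ?P (take i ?u) @ filter ?P (drop i ?u)"
      by (simp add: insert_ones_def filter_replicate)
    also have "\<dots> = filter ?P ?u"
      by (subst filter_append[symmetric]) simp
    also have "\<dots> = ?u"
      using no_one by (auto simp: filter_id_conv)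
    finally show ?thesis .
  qed
  ultimately show ?thesis
    using assms(2) by (simp add: remove_ones_def comp_def)
qed

lemma set_insert_ones:
  assumes "1 \<le> m" shows "set (insert_ones m i v) = insert 1 (Suc ` set v)"
proof -
  have "set (take i (map Suc v)) \<union> set (drop i (map Suc v)) = Suc ` set v"
    by (metis append_take_drop_id set_append set_map)
  with assms show ?thesis
    by (auto simp: insert_ones_def)
qed

lemma finite_Cset: "finite (Cset n k)"
proof (rule finite_subset)
  show "Cset n k \<subseteq> {w. set w \<subseteq> {1..k} \<and> length w = n}"
    by (auto simp: Cset_def)
  show "finite {w. set w \<subseteq> {1..k} \<and> length w = n}"
    by (rule finite_lists_length_eq) simp
qed

lemma insert_ones_in_Cset:
  assumes "2 \<le> k" "m \<in> {1, 2}" "i \<in> {1..n - m}" "v \<in> Cset (n - m) (k - 1)"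
  shows "insert_ones m i v \<in> Cset n k"
proof -
  let ?u = "map Suc v"
  have v: "length v = n - m" "set v = {1..k - 1}" "avoids_010 v" "avoids_000 v" "v \<noteq> []"
      "hd v = k - 1"
    using assms(4) by (simp_all add: Cset_def)
  have "length (insert_ones m i v) = n"
    using assms(2,3) v(1) by (auto simp: insert_ones_def)
  moreover have "set (insert_ones m i v) = {1..k}"
  proof -
    have "1 \<le> m"
      using assms(2) by auto
    then have "set (insert_ones m i v) = insert 1 (Suc ` {1..k - 1})"
      unfolding v(2)[symmetric] by (rule set_insert_ones)
    also have "\<dots> = {1..k}"
      using assms(1) by (simp add: atLeastAtMost_insertL)
    finally show ?thesis .
  qed
  moreover have "avoids_010 (insert_ones m i v)" "avoids_000 (insert_ones m i v)"
  proof -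
    have letters: "\<forall>x\<in>set (take i ?u @ drop i ?u). 1 < x"
      using v(2) by auto
    have "avoids_010 (take i ?u @ drop i ?u)" "avoids_000 (take i ?u @ drop i ?u)"
      using v(3,4) by (simp_all add: avoids_010_map_strict_mono avoids_000_map_inj strict_mono_def)
    with letters show "avoids_010 (insert_ones m i v)" "avoids_000 (insert_ones m i v)"
      unfolding insert_ones_def using assms(2)
      by (auto intro!: avoids_010_insert_min_block avoids_000_insert_min_block)
  qed
  moreover have "insert_ones m i v \<noteq> []" "hd (insert_ones m i v) = k"
    using assms(1,3) v(5,6) by (auto simp: insert_ones_def hd_map)
  ultimately show ?thesis
    by (simp add: Cset_def)
qed

lemma map_Suc_map_diff_one: "0 \<notin> set u \<Longrightarrow> map Suc (map (\<lambda>x. x - 1) u) = u"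
  by (induction u) auto

lemma Cset_remove_block:
  assumes "2 \<le> k" and w: "xs @ replicate m 1 @ ys \<in> Cset n k"
    and ones: "1 \<notin> set xs" "1 \<notin> set ys" "m \<in> {1, 2}"
  defines "v \<equiv> map (\<lambda>x. x - 1) (xs @ ys)"
  shows "length xs \<in> {1..n - m}" and "v \<in> Cset (n - m) (k - 1)"
    and "xs @ replicate m 1 @ ys = insert_ones m (length xs) v"
proof -
  let ?w = "xs @ replicate m 1 @ ys"
  have w: "length ?w = n" "set ?w = {1..k}" "avoids_010 ?w" "avoids_000 ?w" "hd ?w = k"
    using w by (simp_all add: Cset_def)
  have block: "set (replicate m (1::nat)) = {1}"
    using ones(3) by auto
  have xs_ne: "xs \<noteq> []"
  proof
    assume "xs = []"
    then have "hd ?w = 1"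
      using ones(3) by (cases m) auto
    with w(5) assms(1) show False
      by simp
  qed
  then show "length xs \<in> {1..n - m}"
    using w(1) by (auto simp: Suc_le_eq)
  have "set (xs @ ys) = set ?w - {1}"
    using ones(1,2) block by auto
  also have "\<dots> = {2..k}"
    unfolding w(2) by auto
  finally have letters: "set (xs @ ys) = {2..k}" .
  have u: "map Suc v = xs @ ys"
    unfolding v_def using letters by (intro map_Suc_map_diff_one) auto
  then show "?w = insert_ones m (length xs) v"
    by (simp add: insert_ones_def)
  have "Suc ` set v = {2..k}"
    using letters u by (metis set_map)
  also have "\<dots> = Suc ` {1..k - 1}"
    using assms(1) by simp
  finally have "set v = {1..k - 1}"
    by (simp only: inj_image_eq_iff[OF inj_Suc])
  moreover have "avoids_010 (map Suc v)" "avoids_000 (map Suc v)"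
    using avoids_010_remove_middle[OF w(3)] avoids_000_remove_middle[OF w(4)] by (simp_all add: u)
  then have "avoids_010 v" "avoids_000 v"
    by (simp_all add: avoids_010_map_strict_mono avoids_000_map_inj strict_mono_def)
  moreover have "length v = n - m" "v \<noteq> []" "hd v = k - 1"
    using w(1,5) xs_ne by (auto simp: v_def hd_append hd_map)
  ultimately show "v \<in> Cset (n - m) (k - 1)"
    by (simp add: Cset_def)
qed

lemma Cset_decompose:
  assumes "2 \<le> k" and "w \<in> Cset n k"
  obtains m i v where "m \<in> {1, 2}" "i \<in> {1..n - m}" "v \<in> Cset (n - m) (k - 1)"
    "w = insert_ones m i v"
proof -
  have "avoids_010 w" "avoids_000 w" "1 \<in> set w" "\<forall>x\<in>set w. 1 \<le> x"
    using assms by (simp_all add: Cset_def)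
  then obtain xs ys m where "w = xs @ replicate m 1 @ ys" "1 \<notin> set xs" "1 \<notin> set ys"
      "m \<in> {1, 2}"
    by (rule min_letter_block)
  with assms show thesis
    using that Cset_remove_block[of k xs m ys n] by metis
qed

lemma Cset_eq_image_insert_ones:
  assumes "2 \<le> k"
  shows "Cset n k = (\<lambda>(m, i, v). insert_ones m i v) ` (SIGMA m:{1, 2}. {1..n - m} \<times> Cset (n - m) (k - 1))"
    (is "_ = ?f ` ?S")
proof
  show "Cset n k \<subseteq> ?f ` ?S"
  proof
    fix w assume "w \<in> Cset n k"
    with assms obtain m i v where "m \<in> {1, 2}" "i \<in> {1..n - m}" "v \<in> Cset (n - m) (k - 1)"
        "w = insert_ones m i v"
      by (rule Cset_decompose)
    then show "w \<in> ?f ` ?S"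
      by force
  qed
  show "?f ` ?S \<subseteq> Cset n k"
    using insert_ones_in_Cset[OF assms] by auto
qed

lemma inj_on_insert_ones:
  "inj_on (\<lambda>(m, i, v). insert_ones m i v) (SIGMA m:{1, 2}. {1..n - m} \<times> Cset (n - m) (k - 1))"
proof (rule inj_on_inverseI[where g = remove_ones], clarify)
  fix m i v assume "m \<in> {1, 2}" "i \<in> {1..n - m}" "v \<in> Cset (n - m) (k - 1)"
  then show "remove_ones (insert_ones m i v) = (m, i, v)"
    by (intro remove_ones_insert_ones) (auto simp: Cset_def)
qed

theorem mainTheorem3:
  fixes n k :: nat
  assumes "n \<ge> 2" and "k \<ge> 2"
  shows "cnum n k = (n - 1) * cnum (n - 1) (k - 1) + (n - 2) * cnum (n - 2) (k - 1)"
proof -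
  let ?S = "SIGMA m:{1, 2}. {1..n - m} \<times> Cset (n - m) (k - 1)"
  have "cnum n k = card ?S"
    unfolding cnum_def Cset_eq_image_insert_ones[OF assms(2)]
    by (rule card_image[OF inj_on_insert_ones])
  also have "\<dots> = (\<Sum>m\<in>{1, 2}. card ({1..n - m} \<times> Cset (n - m) (k - 1)))"
    by (simp add: finite_Cset)
  also have "\<dots> = (n - 1) * cnum (n - 1) (k - 1) + (n - 2) * cnum (n - 2) (k - 1)"
    by (simp add: card_cartesian_product cnum_def)
  finally show ?thesis .
qed

end
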